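(* Let $k\ge2$ and $n\ge1$ be integers and let $G_{k,n}$ be the graph defined below. Then $G_{k,n}$ is type 2 (it has no $(k+1)$-total colouring), and $$k+1<\chi''_c(G_{k,n})\le k+1+\frac1n.$$
   Context: A half-edge has exactly one end vertex. Let $H_k$ be obtained from $K_{k,k}$ by deleting one vertex but keeping its $k$ incident edges as half-edges, and let $H'_k$ be obtained from $H_k$ by deleting $k-2$ of its half-edges (so $H'_k$ has exactly two half-edges, at distinct vertices). Let $B_1,\ldots,B_n$ be copies of $H'_k$, with the two half-edges of $B_i$ named $f_i$ and $f'_i$. Let $B_0$ be a single vertex $u$ with two half-edges $f_0$ and $f'_{n+1}$. The graph $G_{k,n}$ is obtained from the disjoint union of $B_0,B_1,\ldots,B_n$ by joining, for each $0\le i\le n$, the half-edges $f_i$ and $f'_{i+1}$ into an edge $e_i$ between their end vertices. It is a finite graph of maximum degree $k$. A $(k+1)$-total colouring assigns to vertices and edges one of $k+1$ colours so that adjacent vertices, edges sharing an end vertex, and incident vertex–edge pairs get different colours. For integers $p\ge q\ge1$, a $(p,q)$-total colouring assigns colours in $\{0,\ldots,p-1\}$ to vertices and edges such that $q\le|c(a)-c(b)|\le p-q$ for every such adjacent/incident pair $a,b$; $\chi''_c(G)=\inf\{p/q \mid G \text{ has a } (p,q)\text{-total colouring}\}$. *)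

theory Defs
  imports Complex_Main
begin

text \<open>A simple graph is given by a vertex set V and a set E of edges, each edge
being a 2-element set of vertices.\<close>

definition conflict :: "'v set \<Rightarrow> 'v set set \<Rightarrow> ('v + 'v set) \<Rightarrow> ('v + 'v set) \<Rightarrow> bool" where
  "conflict V E x y \<longleftrightarrow>
     (case (x, y) of
        (Inl u, Inl v) \<Rightarrow> u \<in> V \<and> v \<in> V \<and> {u, v} \<in> E
      | (Inr e, Inr f) \<Rightarrow> e \<in> E \<and> f \<in> E \<and> e \<noteq> f \<and> e \<inter> f \<noteq> {}
      | (Inl v, Inr e) \<Rightarrow> v \<in> V \<and> e \<in> E \<and> v \<in> e
      | (Inr e, Inl v) \<Rightarrow> v \<in> V \<and> e \<in> E \<and> v \<in> e)"

definition elements :: "'v set \<Rightarrow> 'v set set \<Rightarrow> ('v + 'v set) set" where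
  "elements V E = Inl ` V \<union> Inr ` E"

definition total_colouring :: "'v set \<Rightarrow> 'v set set \<Rightarrow> nat \<Rightarrow> ('v + 'v set \<Rightarrow> nat) \<Rightarrow> bool" where
  "total_colouring V E m c \<longleftrightarrow>
     (\<forall>x \<in> elements V E. c x < m) \<and>
     (\<forall>x \<in> elements V E. \<forall>y \<in> elements V E. conflict V E x y \<longrightarrow> c x \<noteq> c y)"

definition pq_total_colouring :: "'v set \<Rightarrow> 'v set set \<Rightarrow> nat \<Rightarrow> nat \<Rightarrow> ('v + 'v set \<Rightarrow> nat) \<Rightarrow> bool" where
  "pq_total_colouring V E p q c \<longleftrightarrow>
     (\<forall>x \<in> elements V E. c x < p) \<and>
     (\<forall>x \<in> elements V E. \<forall>y \<in> elements V E. conflict V E x y \<longrightarrow>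
        q \<le> \<bar>int (c x) - int (c y)\<bar> \<and> \<bar>int (c x) - int (c y)\<bar> \<le> int p - int q)"

definition circ_total_chromatic :: "'v set \<Rightarrow> 'v set set \<Rightarrow> real" where
  "circ_total_chromatic V E =
     Inf {real p / real q | p q. 1 \<le> q \<and> q \<le> p \<and> (\<exists>c. pq_total_colouring V E p q c)}"

text \<open>The vertex u of B_0 is (0,0). For 1 \<le> i \<le> n the
block B_i (a copy of H'_k) has vertices (i, j): j < k are the vertices a_1..a_k of the
side of K_{k,k} that kept its full size, and j = k + l with l < k - 1 are the remaining
vertices b_1..b_{k-1} of the other side (b_k was deleted). The half-edges kept in H'_k
are at a_1 = (i,0) (named f_i) and a_2 = (i,1) (named f'_i).\<close>

definition Gkn_V :: "nat \<Rightarrow> nat \<Rightarrow> (nat \<times> nat) set" where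
  "Gkn_V k n = {(0,0)} \<union> {(i, j) | i j. 1 \<le> i \<and> i \<le> n \<and> j < 2 * k - 1}"

definition end_f :: "nat \<Rightarrow> nat \<times> nat" where
  "end_f i = (if i = 0 then (0,0) else (i, 0))"

definition end_f' :: "nat \<Rightarrow> nat \<Rightarrow> nat \<times> nat" where
  "end_f' n i = (if i = n + 1 then (0,0) else (i, 1))"

definition Gkn_E :: "nat \<Rightarrow> nat \<Rightarrow> (nat \<times> nat) set set" where
  "Gkn_E k n =
     {{(i, j), (i, k + l)} | i j l. 1 \<le> i \<and> i \<le> n \<and> j < k \<and> l < k - 1}
     \<union> {{end_f i, end_f' n (i + 1)} | i. i \<le> n}"

end

theory Submission
  imports Defs "HOL-Number_Theory.Cong"
begin

text \<open>In a (k+1)-total colouring of a block, the vertex a_j and its k - 1 block edges use k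
  colours, so the half-edge at a_j must take the single missing colour; that colour is the common
  colour of all vertices b_l. The half-edges f_i and f'_i of a block therefore get the same colour,
  so e_0, ..., e_n all get one colour, although e_0 and e_n meet at u.

  Rotating a (p,q)-total colouring so that all its colours fall into [0, (k+1) q) and dividing by
  q would give a (k+1)-total colouring. Counting, for each element, the rotations that push it
  out of that interval shows such a rotation exists unless p \<le> N (p - (k+1) q), N the number of
  elements; hence every p/q is at least k + 1 + 1/N. The upper bound is an explicit
  ((k+1) n + 1, n)-total colouring.\<close>

section \<open>Total colourings and circular distance\<close>

lemma elements_simps [simp]:
  "Inl v \<in> elements V E \<longleftrightarrow> v \<in> V"
  "Inr e \<in> elements V E \<longleftrightarrow> e \<in> E"
  by (auto simp: elements_def)

lemma conflict_simps [simp]: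
  "conflict V E (Inl u) (Inl v) \<longleftrightarrow> u \<in> V \<and> v \<in> V \<and> {u, v} \<in> E"
  "conflict V E (Inr e) (Inr f) \<longleftrightarrow> e \<in> E \<and> f \<in> E \<and> e \<noteq> f \<and> e \<inter> f \<noteq> {}"
  "conflict V E (Inl v) (Inr e) \<longleftrightarrow> v \<in> V \<and> e \<in> E \<and> v \<in> e"
  "conflict V E (Inr e) (Inl v) \<longleftrightarrow> v \<in> V \<and> e \<in> E \<and> v \<in> e"
  by (simp_all add: conflict_def)

lemma conflict_in_elements:
  "conflict V E x y \<Longrightarrow> x \<in> elements V E \<and> y \<in> elements V E"
  by (cases x; cases y) auto

lemma total_colouring_lt: "total_colouring V E m c \<Longrightarrow> x \<in> elements V E \<Longrightarrow> c x < m"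
  unfolding total_colouring_def by blast

lemma total_colouring_conflict: "total_colouring V E m c \<Longrightarrow> conflict V E x y \<Longrightarrow> c x \<noteq> c y"
  unfolding total_colouring_def using conflict_in_elements by blast

definition circ_dist_ge :: "nat \<Rightarrow> nat \<Rightarrow> int \<Rightarrow> int \<Rightarrow> bool" where
  "circ_dist_ge p q x y \<longleftrightarrow> int q \<le> (x - y) mod int p \<and> (x - y) mod int p \<le> int p - int q"

lemma circ_dist_ge_sym:
  assumes "circ_dist_ge p q x y"
  shows "circ_dist_ge p q y x"
proof -
  have "(y - x) mod int p = (if (x - y) mod int p = 0 then 0 else int p - (x - y) mod int p)"
    using zmod_zminus1_eq_if[of "x - y" "int p"] by simp
  then show ?thesis using assms by (auto simp: circ_dist_ge_def)
qed

lemma circ_dist_geI: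
  assumes "int q \<le> \<bar>x - y\<bar>" "\<bar>x - y\<bar> \<le> int p - int q"
  shows "circ_dist_ge p q x y"
proof -
  have nonneg: "circ_dist_ge p q a b" if "int q \<le> a - b" "a - b \<le> int p - int q" for a b
  proof (cases "a - b = int p")
    case True
    then show ?thesis using that by (simp add: circ_dist_ge_def)
  next
    case False
    then have "(a - b) mod int p = a - b" using that by (intro mod_pos_pos_trivial) auto
    then show ?thesis using that by (simp add: circ_dist_ge_def)
  qed
  show ?thesis
  proof (cases "0 \<le> x - y")
    case True
    then show ?thesis using assms nonneg by simp
  next
    case False
    then show ?thesis using assms nonneg[of y x] circ_dist_ge_sym by simp
  qed
qed

lemma circ_dist_ge_iff_abs:
  assumes "0 \<le> a" "a < int p" "0 \<le> b" "b < int p"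
  shows "circ_dist_ge p q a b \<longleftrightarrow> int q \<le> \<bar>a - b\<bar> \<and> \<bar>a - b\<bar> \<le> int p - int q"
proof
  assume sep: "circ_dist_ge p q a b"
  show "int q \<le> \<bar>a - b\<bar> \<and> \<bar>a - b\<bar> \<le> int p - int q"
  proof (cases "b \<le> a")
    case True
    then have "(a - b) mod int p = a - b" using assms by (intro mod_pos_pos_trivial) auto
    then show ?thesis using sep True by (simp add: circ_dist_ge_def)
  next
    case False
    then have "(a - b + int p) mod int p = a - b + int p" using assms by (intro mod_pos_pos_trivial) auto
    then show ?thesis using sep False by (simp add: circ_dist_ge_def)
  qed
qed (auto intro: circ_dist_geI)

lemma circ_dist_ge_mod [simp]:
  "circ_dist_ge p q (x mod int p) (y mod int p) \<longleftrightarrow> circ_dist_ge p q x y"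
  by (simp add: circ_dist_ge_def mod_diff_eq)

lemma circ_dist_ge_add [simp]:
  "circ_dist_ge p q (x + t) (y + t) \<longleftrightarrow> circ_dist_ge p q x y"
  by (simp add: circ_dist_ge_def)

lemma pq_total_colouring_iff_circ_dist_ge:
  "pq_total_colouring V E p q c \<longleftrightarrow>
     (\<forall>x \<in> elements V E. c x < p) \<and>
     (\<forall>x \<in> elements V E. \<forall>y \<in> elements V E. conflict V E x y \<longrightarrow>
        circ_dist_ge p q (int (c x)) (int (c y)))"
  unfolding pq_total_colouring_def by (auto simp: circ_dist_ge_iff_abs)

lemma pq_total_colouring_of_circ_dist_ge:
  fixes \<phi> :: "'v + 'v set \<Rightarrow> int"
  assumes "0 < p"
    and "\<And>x y. x \<in> elements V E \<Longrightarrow> y \<in> elements V E \<Longrightarrow> conflict V E x y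
           \<Longrightarrow> circ_dist_ge p q (\<phi> x) (\<phi> y)"
  shows "pq_total_colouring V E p q (\<lambda>z. nat (\<phi> z mod int p))"
  using assms by (auto simp: pq_total_colouring_iff_circ_dist_ge nat_less_iff)

lemma pq_total_colouring_rotate:
  assumes "pq_total_colouring V E p q c"
  shows "pq_total_colouring V E p q (\<lambda>z. (c z + t) mod p)"
proof -
  have "int ((c z + t) mod p) = (int (c z) + int t) mod int p" for z
    by (simp add: of_nat_mod)
  moreover have "0 < p" if "x \<in> elements V E" for x
    using assms that by (auto simp: pq_total_colouring_def)
  ultimately show ?thesis
    using assms by (auto simp: pq_total_colouring_iff_circ_dist_ge)
qed

lemma total_colouring_div:
  assumes pq: "pq_total_colouring V E p q c" and "0 < q"
    and below: "\<And>x. x \<in> elements V E \<Longrightarrow> c x < m * q"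
  shows "total_colouring V E m (\<lambda>z. c z div q)"
  unfolding total_colouring_def
proof (intro conjI ballI impI)
  fix x assume "x \<in> elements V E"
  then show "c x div q < m"
    using below \<open>0 < q\<close> by (simp add: div_less_iff_less_mult)
next
  fix x y assume "x \<in> elements V E" "y \<in> elements V E" "conflict V E x y"
  then have far: "int q \<le> \<bar>int (c x) - int (c y)\<bar>"
    using pq by (auto simp: pq_total_colouring_def)
  show "c x div q \<noteq> c y div q"
  proof
    assume same: "c x div q = c y div q"
    have "q * (c x div q) \<le> c x" "c x < q + q * (c x div q)"
      "q * (c y div q) \<le> c y" "c y < q + q * (c y div q)"
      using dividend_less_times_div[OF \<open>0 < q\<close>] by simp_all
    moreover have "q * (c x div q) = q * (c y div q)" using same by simp
    ultimately show False using far by linarith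
  qed
qed

section \<open>A strict lower bound for the circular total chromatic number\<close>

lemma rotation_into_initial_segment:
  fixes c :: "'a \<Rightarrow> nat"
  assumes "finite X" and small: "card X * (p - m) < p"
  obtains t where "\<And>x. x \<in> X \<Longrightarrow> (c x + t) mod p < m"
proof -
  define bad where "bad x = {t. t < p \<and> m \<le> (c x + t) mod p}" for x
  have card_bad: "card (bad x) \<le> p - m" for x
  proof -
    have "inj_on (\<lambda>t. (c x + t) mod p) (bad x)"
    proof (rule inj_onI)
      fix t t' assume "t \<in> bad x" "t' \<in> bad x" "(c x + t) mod p = (c x + t') mod p"
      then show "t = t'"
        by (metis bad_def cong_add_lcancel_nat cong_def cong_less_modulus_unique_nat mem_Collect_eq)
    qed
    moreover have "(\<lambda>t. (c x + t) mod p) ` bad x \<subseteq> {m..<p}"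
      by (auto simp: bad_def)
    ultimately have "card (bad x) \<le> card {m..<p}"
      by (rule card_inj_on_le) simp
    then show ?thesis by simp
  qed
  have "card (\<Union>x\<in>X. bad x) \<le> (\<Sum>x\<in>X. card (bad x))"
    by (rule card_UN_le) fact
  also have "\<dots> \<le> card X * (p - m)"
    using sum_bounded_above[of X "\<lambda>x. card (bad x)" "p - m"] card_bad by simp
  finally have "card (\<Union>x\<in>X. bad x) < card {..<p}"
    using small by simp
  moreover have "finite (\<Union>x\<in>X. bad x)"
    using \<open>finite X\<close> by (auto simp: bad_def)
  ultimately have "\<not> {..<p} \<subseteq> (\<Union>x\<in>X. bad x)"
    using card_mono not_le by blast
  then obtain t where "t < p" "t \<notin> (\<Union>x\<in>X. bad x)" by auto
  then show ?thesis using that by (auto simp: bad_def not_le)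
qed

lemma total_colouring_of_pq_total_colouring:
  assumes "finite (elements V E)" and pq: "pq_total_colouring V E p q c" and "0 < q"
    and small: "card (elements V E) * (p - m * q) < p"
  shows "\<exists>c'. total_colouring V E m c'"
proof -
  obtain t where t: "\<And>x. x \<in> elements V E \<Longrightarrow> (c x + t) mod p < m * q"
    using rotation_into_initial_segment[OF assms(1) small] by blast
  have "total_colouring V E m (\<lambda>z. (c z + t) mod p div q)"
    by (rule total_colouring_div[OF pq_total_colouring_rotate[OF pq] \<open>0 < q\<close> t])
  then show ?thesis by blast
qed

lemma circ_total_chromatic_le:
  assumes "1 \<le> q" "q \<le> p" "pq_total_colouring V E p q c"
  shows "circ_total_chromatic V E \<le> real p / real q"
  unfolding circ_total_chromatic_def
  by (rule cInf_lower) (use assms in \<open>auto intro: bdd_belowI[of _ 0]\<close>)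

lemma circ_total_chromatic_gt:
  assumes fin: "finite (elements V E)"
    and not_colourable: "\<not> (\<exists>c. total_colouring V E m c)"
    and "1 \<le> q" "q \<le> p" "pq_total_colouring V E p q c"
  shows "real m < circ_total_chromatic V E"
proof -
  define N where "N = card (elements V E)"
  have "elements V E \<noteq> {}"
    using not_colourable by (auto simp: total_colouring_def)
  then have "N \<ge> 1" using fin by (simp add: N_def Suc_le_eq card_gt_0_iff)
  have "real m + 1 / real N \<le> real p' / real q'"
    if "1 \<le> q'" "q' \<le> p'" "pq_total_colouring V E p' q' c'" for p' q' c'
  proof -
    have "p' \<le> N * (p' - m * q')"
      using total_colouring_of_pq_total_colouring[OF fin that(3), of m] not_colourable that(1)
      by (force simp: N_def not_less)
    then have "m * q' < p'" using that by (cases "m * q' < p'") auto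
    then have "real p' \<le> real N * (real p' - real m * real q')"
      using \<open>p' \<le> N * (p' - m * q')\<close> by (metis of_nat_diff of_nat_le_iff of_nat_mult less_imp_le)
    moreover have "real q' \<le> real p'" using that by simp
    ultimately have "real q' \<le> real N * (real p' - real m * real q')" by linarith
    then show ?thesis
      using \<open>N \<ge> 1\<close> \<open>1 \<le> q'\<close> by (simp add: field_simps)
  qed
  then have "real m + 1 / real N \<le> circ_total_chromatic V E"
    unfolding circ_total_chromatic_def by (intro cInf_greatest) (use assms in auto)
  moreover have "0 < 1 / real N" using \<open>N \<ge> 1\<close> by simp
  ultimately show ?thesis by linarith
qed

section \<open>G(k,n) has no (k+1)-total colouring\<close>

text \<open>A (k+1)-total colouring of K_{k,k-1}: ca j, cb l and ce j l are the colours of the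
  vertices a_j (j < k), b_l (l < k - 1) and of the edge a_j b_l.\<close>

locale biclique_total_colouring =
  fixes k :: nat and ca cb :: "nat \<Rightarrow> nat" and ce :: "nat \<Rightarrow> nat \<Rightarrow> nat"
  assumes k_ge_2: "k \<ge> 2"
    and ca_lt: "j < k \<Longrightarrow> ca j < k + 1"
    and cb_lt: "l < k - 1 \<Longrightarrow> cb l < k + 1"
    and ce_lt: "j < k \<Longrightarrow> l < k - 1 \<Longrightarrow> ce j l < k + 1"
    and ca_cb: "j < k \<Longrightarrow> l < k - 1 \<Longrightarrow> ca j \<noteq> cb l"
    and ca_ce: "j < k \<Longrightarrow> l < k - 1 \<Longrightarrow> ca j \<noteq> ce j l"
    and cb_ce: "j < k \<Longrightarrow> l < k - 1 \<Longrightarrow> cb l \<noteq> ce j l"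
    and ce_row: "j < k \<Longrightarrow> l < k - 1 \<Longrightarrow> l' < k - 1 \<Longrightarrow> l \<noteq> l' \<Longrightarrow> ce j l \<noteq> ce j l'"
    and ce_col: "j < k \<Longrightarrow> j' < k \<Longrightarrow> l < k - 1 \<Longrightarrow> j \<noteq> j' \<Longrightarrow> ce j l \<noteq> ce j' l"
begin

lemma colour_on_edge_at_b:
  assumes l: "l < k - 1" and "\<alpha> < k + 1" and "cb l \<noteq> \<alpha>"
  obtains j where "j < k" "ce j l = \<alpha>"
proof -
  define f where "f j = (if j = k then cb l else ce j l)" for j
  have "inj_on f {..<k + 1}"
    by (rule inj_onI) (auto simp: f_def less_Suc_eq split: if_splits; metis l cb_ce ce_col)
  moreover have "f ` {..<k + 1} \<subseteq> {..<k + 1}"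
    using cb_lt ce_lt l by (auto simp: f_def less_Suc_eq)
  ultimately have "f ` {..<k + 1} = {..<k + 1}"
    by (intro endo_inj_surj) auto
  then obtain j where "j < k + 1" "f j = \<alpha>"
    using \<open>\<alpha> < k + 1\<close> by (metis imageE lessThan_iff)
  then show ?thesis
    using that \<open>cb l \<noteq> \<alpha>\<close> by (auto simp: f_def less_Suc_eq split: if_splits)
qed

lemma colour_class_matching:
  assumes "\<alpha> < k + 1" and avoid: "\<And>l. l < k - 1 \<Longrightarrow> cb l \<noteq> \<alpha>"
  obtains g where "inj_on g {..<k - 1}" "\<And>l. l < k - 1 \<Longrightarrow> g l < k \<and> ce (g l) l = \<alpha>"
proof -
  define g where "g l = (SOME j. j < k \<and> ce j l = \<alpha>)" for l
  have g: "g l < k \<and> ce (g l) l = \<alpha>" if "l < k - 1" for l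
    unfolding g_def
    by (rule someI_ex) (metis colour_on_edge_at_b[OF that \<open>\<alpha> < k + 1\<close> avoid[OF that]])
  have "inj_on g {..<k - 1}"
    unfolding inj_on_def using g ce_row by (metis lessThan_iff)
  then show ?thesis using g that by blast
qed

lemma inj_on_ca: "inj_on ca {..<k}"
proof (rule inj_onI, rule ccontr)
  fix j j' assume "j \<in> {..<k}" "j' \<in> {..<k}" and same: "ca j = ca j'" and "j \<noteq> j'"
  then have j: "j < k" "j' < k" by auto
  have "cb l \<noteq> ca j" if "l < k - 1" for l
    using ca_cb[OF j(1) that] by simp
  then obtain g where g: "inj_on g {..<k - 1}" "\<And>l. l < k - 1 \<Longrightarrow> g l < k \<and> ce (g l) l = ca j"
    using colour_class_matching[OF ca_lt[OF j(1)]] by blast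
  have "g l \<in> {..<k} - {j, j'}" if "l < k - 1" for l
    using g(2)[OF that] ca_ce[OF j(1) that] ca_ce[OF j(2) that] same by auto
  then have "g ` {..<k - 1} \<subseteq> {..<k} - {j, j'}" by auto
  then have "card (g ` {..<k - 1}) \<le> card ({..<k} - {j, j'})"
    by (intro card_mono) auto
  moreover have "card (g ` {..<k - 1}) = k - 1"
    using card_image[OF g(1)] by simp
  moreover have "card ({..<k} - {j, j'}) = k - 2"
    using j \<open>j \<noteq> j'\<close> by (simp add: card_Diff_subset)
  ultimately show False using k_ge_2 by linarith
qed

lemma missing_colour_eq_cb:
  assumes j0: "j0 < k" and "h < k + 1" and "ca j0 \<noteq> h"
    and missing: "\<And>l. l < k - 1 \<Longrightarrow> ce j0 l \<noteq> h" and l0: "l0 < k - 1"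
  shows "h = cb l0"
  \<comment> \<open>If h = ca j, the edges coloured h match all b_l injectively into the k - 1 vertices
    a_j' with j' \<noteq> j, so one of them is at a_j0. Otherwise the ca j, cb l0 and h would be
    k + 2 distinct colours.\<close>
proof (rule ccontr)
  assume "h \<noteq> cb l0"
  show False
  proof (cases "h \<in> ca ` {..<k}")
    case True
    then obtain j where j: "j < k" "ca j = h" by auto
    have "cb l \<noteq> h" if "l < k - 1" for l
      using ca_cb[OF j(1) that] j(2) by simp
    then obtain g where g: "inj_on g {..<k - 1}" "\<And>l. l < k - 1 \<Longrightarrow> g l < k \<and> ce (g l) l = h"
      using colour_class_matching[OF \<open>h < k + 1\<close>] by blast
    have "g l \<in> {..<k} - {j}" if "l < k - 1" for l
      using g(2)[OF that] ca_ce[OF j(1) that] j(2) by auto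
    then have "g ` {..<k - 1} \<subseteq> {..<k} - {j}" by auto
    moreover have "card (g ` {..<k - 1}) = card ({..<k} - {j})"
      using card_image[OF g(1)] j by simp
    ultimately have "g ` {..<k - 1} = {..<k} - {j}"
      by (metis card_subset_eq finite_Diff finite_lessThan)
    moreover have "j0 \<noteq> j" using j \<open>ca j0 \<noteq> h\<close> by auto
    ultimately obtain l where "l < k - 1" "g l = j0"
      using j0 by (metis (no_types, lifting) Diff_iff empty_iff imageE insert_iff lessThan_iff)
    then show False using g(2) missing by metis
  next
    case False
    have "cb l0 \<notin> ca ` {..<k}" using ca_cb l0 by (metis imageE lessThan_iff)
    then have "card (insert h (insert (cb l0) (ca ` {..<k}))) = k + 2"
      using False \<open>h \<noteq> cb l0\<close> card_image[OF inj_on_ca] by simp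
    moreover have "insert h (insert (cb l0) (ca ` {..<k})) \<subseteq> {..<k + 1}"
      using ca_lt cb_lt l0 \<open>h < k + 1\<close> by auto
    then have "card (insert h (insert (cb l0) (ca ` {..<k}))) \<le> k + 1"
      by (metis card_lessThan card_mono finite_lessThan)
    ultimately show False by simp
  qed
qed

end

abbreviation block_edge :: "nat \<Rightarrow> nat \<Rightarrow> nat \<Rightarrow> nat \<Rightarrow> (nat \<times> nat) set" where
  "block_edge k i j l \<equiv> {(i, j), (i, k + l)}"

abbreviation connector :: "nat \<Rightarrow> nat \<Rightarrow> (nat \<times> nat) set" where
  "connector n i \<equiv> {end_f i, end_f' n (i + 1)}"

lemma Gkn_V_block: "1 \<le> i \<Longrightarrow> i \<le> n \<Longrightarrow> j < 2 * k - 1 \<Longrightarrow> (i, j) \<in> Gkn_V k n"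
  by (auto simp: Gkn_V_def)

lemma block_edge_in_Gkn_E:
  "1 \<le> i \<Longrightarrow> i \<le> n \<Longrightarrow> j < k \<Longrightarrow> l < k - 1 \<Longrightarrow> block_edge k i j l \<in> Gkn_E k n"
  unfolding Gkn_E_def by blast

lemma connector_in_Gkn_E: "i \<le> n \<Longrightarrow> connector n i \<in> Gkn_E k n"
  unfolding Gkn_E_def by blast

lemma Gkn_E_cases:
  assumes "e \<in> Gkn_E k n"
  obtains (block) i j l where "e = block_edge k i j l" "1 \<le> i" "i \<le> n" "j < k" "l < k - 1"
    | (connector) i where "e = connector n i" "i \<le> n"
  using assms unfolding Gkn_E_def by blast

lemma finite_elements_Gkn: "finite (elements (Gkn_V k n) (Gkn_E k n))"
proof -
  have "Gkn_V k n \<subseteq> {..n} \<times> {..2 * k}"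
    by (auto simp: Gkn_V_def)
  then have "finite (Gkn_V k n)" by (rule finite_subset) simp
  moreover have "Gkn_E k n \<subseteq>
      (\<lambda>(i, j, l). block_edge k i j l) ` ({..n} \<times> {..<k} \<times> {..<k}) \<union> connector n ` {..n}"
    by (auto simp: Gkn_E_def image_iff)
  then have "finite (Gkn_E k n)" by (rule finite_subset) simp
  ultimately show ?thesis by (simp add: elements_def)
qed

lemma connector_colour_step:
  assumes k2: "k \<ge> 2" and tc: "total_colouring (Gkn_V k n) (Gkn_E k n) (k + 1) c" and "i < n"
  shows "c (Inr (connector n (i + 1))) = c (Inr (connector n i))"
proof -
  let ?V = "Gkn_V k n" and ?E = "Gkn_E k n" and ?b = "i + 1"
  have vertex: "(?b, j) \<in> ?V" if "j < 2 * k - 1" for j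
    using Gkn_V_block \<open>i < n\<close> that by simp
  have edge: "block_edge k ?b j l \<in> ?E" if "j < k" "l < k - 1" for j l
    using block_edge_in_Gkn_E \<open>i < n\<close> that by simp
  have lt: "c x < k + 1" if "x \<in> elements ?V ?E" for x
    using total_colouring_lt[OF tc that] .
  note ne = total_colouring_conflict[OF tc]
  interpret block: biclique_total_colouring k "\<lambda>j. c (Inl (?b, j))" "\<lambda>l. c (Inl (?b, k + l))"
    "\<lambda>j l. c (Inr (block_edge k ?b j l))"
  proof unfold_locales
    show "c (Inl (?b, j)) < k + 1" if "j < k" for j
      using lt vertex that by simp
    show "c (Inl (?b, k + l)) < k + 1" if "l < k - 1" for l
      using lt vertex that by simp
    show "c (Inr (block_edge k ?b j l)) < k + 1" if "j < k" "l < k - 1" for j l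
      using lt edge that by simp
    show "c (Inl (?b, j)) \<noteq> c (Inl (?b, k + l))"
      "c (Inl (?b, j)) \<noteq> c (Inr (block_edge k ?b j l))"
      "c (Inl (?b, k + l)) \<noteq> c (Inr (block_edge k ?b j l))" if "j < k" "l < k - 1" for j l
      by (rule ne; use vertex edge that in simp)+
    show "c (Inr (block_edge k ?b j l)) \<noteq> c (Inr (block_edge k ?b j l'))"
      if "j < k" "l < k - 1" "l' < k - 1" "l \<noteq> l'" for j l l'
      by (rule ne) (use edge that in \<open>auto simp: doubleton_eq_iff\<close>)
    show "c (Inr (block_edge k ?b j l)) \<noteq> c (Inr (block_edge k ?b j' l))"
      if "j < k" "j' < k" "l < k - 1" "j \<noteq> j'" for j j' l
      by (rule ne) (use edge that in \<open>auto simp: doubleton_eq_iff\<close>)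
  qed (fact k2)
  have ends: "end_f ?b = (?b, 0)" "end_f' n ?b = (?b, 1)"
    using \<open>i < n\<close> by (simp_all add: end_f_def end_f'_def)
  have connectors: "connector n ?b \<in> ?E" "connector n i \<in> ?E"
    using connector_in_Gkn_E \<open>i < n\<close> by simp_all
  have "c (Inr (connector n ?b)) = c (Inl (?b, k + 0))"
  proof (rule block.missing_colour_eq_cb)
    show "c (Inr (connector n ?b)) < k + 1" using lt connectors by simp
    show "c (Inl (?b, 0)) \<noteq> c (Inr (connector n ?b))"
      by (rule ne) (use vertex connectors ends k2 in simp)
    show "c (Inr (block_edge k ?b 0 l)) \<noteq> c (Inr (connector n ?b))" if "l < k - 1" for l
      by (rule ne) (use edge connectors ends k2 that in \<open>auto simp: end_f'_def doubleton_eq_iff\<close>)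
  qed (use k2 in auto)
  moreover have "c (Inr (connector n i)) = c (Inl (?b, k + 0))"
  proof (rule block.missing_colour_eq_cb)
    show "c (Inr (connector n i)) < k + 1" using lt connectors by simp
    show "c (Inl (?b, 1)) \<noteq> c (Inr (connector n i))"
      by (rule ne) (use vertex connectors ends k2 in simp)
    show "c (Inr (block_edge k ?b 1 l)) \<noteq> c (Inr (connector n i))" if "l < k - 1" for l
      by (rule ne) (use edge connectors ends k2 that in \<open>auto simp: end_f_def doubleton_eq_iff\<close>)
  qed (use k2 in auto)
  ultimately show ?thesis by simp
qed

lemma Gkn_not_total_colourable:
  assumes "k \<ge> 2" and "n \<ge> 1"
  shows "\<not> (\<exists>c. total_colouring (Gkn_V k n) (Gkn_E k n) (k + 1) c)"
proof
  assume "\<exists>c. total_colouring (Gkn_V k n) (Gkn_E k n) (k + 1) c"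
  then obtain c where tc: "total_colouring (Gkn_V k n) (Gkn_E k n) (k + 1) c" ..
  have same: "c (Inr (connector n i)) = c (Inr (connector n 0))" if "i \<le> n" for i
    using that
  proof (induction i)
    case (Suc i)
    then show ?case using connector_colour_step[OF \<open>k \<ge> 2\<close> tc, of i] by simp
  qed simp
  have "connector n n = {(n, 0), (0, 0)}" "connector n 0 = {(0, 0), (1, 1)}"
    using \<open>n \<ge> 1\<close> by (simp_all add: end_f_def end_f'_def)
  then have "conflict (Gkn_V k n) (Gkn_E k n) (Inr (connector n n)) (Inr (connector n 0))"
    using connector_in_Gkn_E[of n n k] connector_in_Gkn_E[of 0 n k] \<open>n \<ge> 1\<close>
    by (auto simp: doubleton_eq_iff)
  then show False using same[of n] total_colouring_conflict[OF tc] by simp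
qed

section \<open>((k+1) n + 1, n)-total colourings of G(k,n)\<close>

lemma block_edge_meets_connector:
  assumes "k \<ge> 2" "1 \<le> i" "j < k" "i' \<le> n" "block_edge k i j l \<inter> connector n i' \<noteq> {}"
  shows "(i' = i \<and> j = 0) \<or> (i = i' + 1 \<and> j = 1)"
  using assms by (auto simp: end_f_def end_f'_def split: if_splits)

lemma connectors_meet:
  assumes "i \<le> n" "i' \<le> n" "i \<noteq> i'" "connector n i \<inter> connector n i' \<noteq> {}"
  shows "{i, i'} = {0, n}"
  using assms by (auto simp: end_f_def end_f'_def split: if_splits)

lemma Gkn_adjacent_edges:
  assumes k2: "k \<ge> 2" and e: "e \<in> Gkn_E k n" and f: "f \<in> Gkn_E k n" and "e \<noteq> f" "e \<inter> f \<noteq> {}"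
  obtains (same_a) i j l l' where "e = block_edge k i j l" "f = block_edge k i j l'"
      "1 \<le> i" "i \<le> n" "j < k" "l < k - 1" "l' < k - 1" "l \<noteq> l'"
  | (same_b) i j j' l where "e = block_edge k i j l" "f = block_edge k i j' l"
      "1 \<le> i" "i \<le> n" "j < k" "j' < k" "l < k - 1" "j \<noteq> j'"
  | (out) i l where "{e, f} = {block_edge k i 0 l, connector n i}" "1 \<le> i" "i \<le> n" "l < k - 1"
  | (into) i l where "{e, f} = {block_edge k (i + 1) 1 l, connector n i}" "i + 1 \<le> n" "l < k - 1"
  | (centre) "{e, f} = {connector n 0, connector n n}"
proof -
  have block_connector: thesis
    if "{e, f} = {block_edge k i j l, connector n i'}" "1 \<le> i" "i \<le> n" "j < k" "l < k - 1" "i' \<le> n"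
    for i j l i'
  proof -
    have "block_edge k i j l \<inter> connector n i' \<noteq> {}"
      using that(1) \<open>e \<inter> f \<noteq> {}\<close> by (auto simp: doubleton_eq_iff)
    then have "(i' = i \<and> j = 0) \<or> (i = i' + 1 \<and> j = 1)"
      using block_edge_meets_connector k2 that by blast
    then show thesis using out into that by auto
  qed
  from e show thesis
  proof (cases rule: Gkn_E_cases)
    case eb: (block i j l)
    from f show thesis
    proof (cases rule: Gkn_E_cases)
      case fb: (block i' j' l')
      obtain v where "v \<in> e" "v \<in> f" using \<open>e \<inter> f \<noteq> {}\<close> by blast
      then have "v = (i, j) \<or> v = (i, k + l)" "v = (i', j') \<or> v = (i', k + l')"
        using eb fb by simp_all
      then have "(i' = i \<and> j' = j) \<or> (i' = i \<and> l' = l)"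
        using eb(4) fb(4) by auto
      then show thesis
      proof
        assume "i' = i \<and> j' = j"
        then show thesis using same_a eb fb \<open>e \<noteq> f\<close> by blast
      next
        assume "i' = i \<and> l' = l"
        then show thesis using same_b eb fb \<open>e \<noteq> f\<close> by blast
      qed
    next
      case (connector i')
      then show thesis using block_connector eb by blast
    qed
  next
    case ec: (connector i)
    from f show thesis
    proof (cases rule: Gkn_E_cases)
      case (block i' j' l')
      have "{e, f} = {block_edge k i' j' l', connector n i}"
        using ec(1) block(1) by (metis insert_commute)
      then show thesis using block_connector block ec by blast
    next
      case (connector i')
      have "i \<noteq> i'" using ec(1) connector(1) \<open>e \<noteq> f\<close> by blast
      then have "{i, i'} = {0, n}"
        using connectors_meet[OF ec(2) connector(2)] ec(1) connector(1) \<open>e \<inter> f \<noteq> {}\<close> by simp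
      then consider "i = 0" "i' = n" | "i = n" "i' = 0"
        by (auto simp: doubleton_eq_iff)
      then show thesis
      proof cases
        case 1
        then show thesis using centre ec(1) connector(1) by simp
      next
        case 2
        have "{e, f} = {connector n 0, connector n n}"
          unfolding ec(1) connector(1) 2 by (rule insert_commute)
        then show thesis by (rule centre)
      qed
    qed
  qed
qed

text \<open>Reads the colour of an edge of G(k,n) off its end vertices: a block edge is the only kind
  with an end vertex (i, k + l), and e_n is the only connector whose end vertices all have
  second coordinate 0.\<close>

definition Gkn_edge_colour ::
    "nat \<Rightarrow> nat \<Rightarrow> (nat \<Rightarrow> nat \<Rightarrow> nat \<Rightarrow> int) \<Rightarrow> (nat \<Rightarrow> int) \<Rightarrow> (nat \<times> nat) set \<Rightarrow> int" where
  "Gkn_edge_colour k n cblock cconn e =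
     (if k \<le> Max (snd ` e) then cblock (Min (fst ` e)) (Min (snd ` e)) (Max (snd ` e) - k)
      else if Max (snd ` e) = 0 then cconn n else cconn (Min (fst ` e)))"

lemma Gkn_edge_colour_block [simp]:
  "j < k \<Longrightarrow> Gkn_edge_colour k n cblock cconn (block_edge k i j l) = cblock i j l"
  by (simp add: Gkn_edge_colour_def)

text \<open>Stated for Suc i, the simp normal form of connector n i.\<close>

lemma Gkn_edge_colour_connector [simp]:
  assumes "k \<ge> 2" "n \<ge> 1" "i \<le> n"
  shows "Gkn_edge_colour k n cblock cconn {end_f i, end_f' n (Suc i)} = cconn i"
proof (cases "i = n")
  case True
  then have "{end_f i, end_f' n (Suc i)} = {(n, 0), (0, 0)}"
    using assms by (simp add: end_f_def end_f'_def)
  then show ?thesis using assms True by (simp add: Gkn_edge_colour_def)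
next
  case False
  then have "{end_f i, end_f' n (Suc i)} = {(i, 0), (i + 1, 1)}"
    using assms by (simp add: end_f_def end_f'_def)
  then show ?thesis using assms False by (simp add: Gkn_edge_colour_def)
qed

lemma Gkn_pq_total_colouringI:
  fixes p q :: nat and cvert :: "nat \<times> nat \<Rightarrow> int"
    and cblock :: "nat \<Rightarrow> nat \<Rightarrow> nat \<Rightarrow> int" and cconn :: "nat \<Rightarrow> int"
  defines "far \<equiv> circ_dist_ge p q"
  assumes k2: "k \<ge> 2" and n1: "n \<ge> 1" and "0 < p"
    and block_ends: "\<And>i j l. 1 \<le> i \<Longrightarrow> i \<le> n \<Longrightarrow> j < k \<Longrightarrow> l < k - 1 \<Longrightarrow>
      far (cvert (i, j)) (cvert (i, k + l))"
    and connector_ends: "\<And>i. i \<le> n \<Longrightarrow> far (cvert (end_f i)) (cvert (end_f' n (i + 1)))"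
    and block_a: "\<And>i j l. 1 \<le> i \<Longrightarrow> i \<le> n \<Longrightarrow> j < k \<Longrightarrow> l < k - 1 \<Longrightarrow>
      far (cvert (i, j)) (cblock i j l)"
    and block_b: "\<And>i j l. 1 \<le> i \<Longrightarrow> i \<le> n \<Longrightarrow> j < k \<Longrightarrow> l < k - 1 \<Longrightarrow>
      far (cvert (i, k + l)) (cblock i j l)"
    and connector_f: "\<And>i. i \<le> n \<Longrightarrow> far (cvert (end_f i)) (cconn i)"
    and connector_f': "\<And>i. i \<le> n \<Longrightarrow> far (cvert (end_f' n (i + 1))) (cconn i)"
    and block_same_a: "\<And>i j l l'. 1 \<le> i \<Longrightarrow> i \<le> n \<Longrightarrow> j < k \<Longrightarrow> l < k - 1 \<Longrightarrow> l' < k - 1 \<Longrightarrow>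
      l \<noteq> l' \<Longrightarrow> far (cblock i j l) (cblock i j l')"
    and block_same_b: "\<And>i j j' l. 1 \<le> i \<Longrightarrow> i \<le> n \<Longrightarrow> j < k \<Longrightarrow> j' < k \<Longrightarrow> l < k - 1 \<Longrightarrow>
      j \<noteq> j' \<Longrightarrow> far (cblock i j l) (cblock i j' l)"
    and block_out: "\<And>i l. 1 \<le> i \<Longrightarrow> i \<le> n \<Longrightarrow> l < k - 1 \<Longrightarrow> far (cblock i 0 l) (cconn i)"
    and block_into: "\<And>i l. i + 1 \<le> n \<Longrightarrow> l < k - 1 \<Longrightarrow> far (cblock (i + 1) 1 l) (cconn i)"
    and connectors_at_centre: "far (cconn 0) (cconn n)"
  shows "pq_total_colouring (Gkn_V k n) (Gkn_E k n) p q
           (\<lambda>z. nat (case_sum cvert (Gkn_edge_colour k n cblock cconn) z mod int p))"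
proof (rule pq_total_colouring_of_circ_dist_ge[OF \<open>0 < p\<close>])
  let ?E = "Gkn_E k n" and ?ecol = "Gkn_edge_colour k n cblock cconn"
  have sym: "far x y \<Longrightarrow> far y x" for x y
    unfolding far_def by (rule circ_dist_ge_sym)
  have vertex_vertex: "far (cvert u) (cvert v)" if "{u, v} \<in> ?E" for u v
    using that
  proof (cases rule: Gkn_E_cases)
    case (block i j l)
    then show ?thesis using block_ends sym by (auto simp: doubleton_eq_iff)
  next
    case (connector i)
    then show ?thesis using connector_ends sym by (auto simp: doubleton_eq_iff)
  qed
  have vertex_edge: "far (cvert v) (?ecol e)" if "e \<in> ?E" "v \<in> e" for v e
    using that(1)
  proof (cases rule: Gkn_E_cases)
    case (block i j l)
    then show ?thesis using that(2) block_a block_b by auto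
  next
    case (connector i)
    then have "?ecol e = cconn i" using Gkn_edge_colour_connector k2 n1 by simp
    then show ?thesis using connector that(2) connector_f connector_f' by auto
  qed
  have edge_edge: "far (?ecol e) (?ecol f)" if "e \<in> ?E" "f \<in> ?E" "e \<noteq> f" "e \<inter> f \<noteq> {}" for e f
  proof -
    have "far (?ecol e) (?ecol f) \<and> far (?ecol f) (?ecol e)"
      using k2 that
    proof (cases rule: Gkn_adjacent_edges)
      case (same_a i j l l')
      then show ?thesis using block_same_a sym by simp
    next
      case (same_b i j j' l)
      then show ?thesis using block_same_b sym by simp
    next
      case (out i l)
      then show ?thesis using block_out[of i l] sym k2 n1 by (auto simp: doubleton_eq_iff)
    next
      case (into i l)
      then show ?thesis using block_into[of i l] sym k2 n1 by (auto simp: doubleton_eq_iff)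
    next
      case centre
      then show ?thesis using connectors_at_centre sym k2 n1 by (auto simp: doubleton_eq_iff)
    qed
    then show ?thesis ..
  qed
  fix x y assume "x \<in> elements (Gkn_V k n) ?E" "y \<in> elements (Gkn_V k n) ?E"
    and "conflict (Gkn_V k n) ?E x y"
  then show "circ_dist_ge p q (case_sum cvert ?ecol x) (case_sum cvert ?ecol y)"
    using vertex_vertex vertex_edge edge_edge sym unfolding far_def
    by (cases x; cases y) auto
qed

lemma circ_dist_ge_slots:
  assumes "s \<noteq> s'" "1 \<le> s" "s \<le> k" "1 \<le> s'" "s' \<le> k"
  shows "circ_dist_ge ((k + 1) * n + 1) n (int (s * n + i)) (int (s' * n + i))"
proof (rule circ_dist_geI)
  have "int (s * n + i) - int (s' * n + i) = (int s - int s') * int n"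
    by (simp add: algebra_simps)
  then have diff: "\<bar>int (s * n + i) - int (s' * n + i)\<bar> = \<bar>int s - int s'\<bar> * int n"
    by (simp add: abs_mult)
  have "1 \<le> \<bar>int s - int s'\<bar>" "\<bar>int s - int s'\<bar> \<le> int k"
    using assms by auto
  then have "1 * int n \<le> \<bar>int s - int s'\<bar> * int n" "\<bar>int s - int s'\<bar> * int n \<le> int k * int n"
    by (intro mult_right_mono; simp)+
  then show "int n \<le> \<bar>int (s * n + i) - int (s' * n + i)\<bar>"
    "\<bar>int (s * n + i) - int (s' * n + i)\<bar> \<le> int ((k + 1) * n + 1) - int n"
    unfolding diff by (simp_all add: algebra_simps)
qed

lemma circ_dist_ge_slot_level:
  assumes "1 \<le> s" "s \<le> k" "d \<le> 1"
  shows "circ_dist_ge ((k + 1) * n + 1) n (int (s * n + i + d)) (int i)"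
proof (rule circ_dist_geI)
  have "n \<le> s * n" "s * n \<le> k * n" using assms by simp_all
  then have "int n \<le> int s * int n" "int s * int n \<le> int k * int n"
    by (metis of_nat_le_iff of_nat_mult)+
  then show "int n \<le> \<bar>int (s * n + i + d) - int i\<bar>"
    "\<bar>int (s * n + i + d) - int i\<bar> \<le> int ((k + 1) * n + 1) - int n"
    using assms by (simp_all add: algebra_simps)
qed

text \<open>For k \<ge> 3 every element of block i gets a colour s n + i with a slot s \<le> k: the b_l
  get slot 0, the edges at a_j the slots j + 1, ..., j + k - 1 taken cyclically in 1..k, and a_j the
  one slot left over.\<close>

definition slot :: "nat \<Rightarrow> nat \<Rightarrow> nat" where
  "slot k j = (if j = 0 then k else j)"

definition edge_slot :: "nat \<Rightarrow> nat \<Rightarrow> nat \<Rightarrow> nat" where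
  "edge_slot k j l = (if j + l < k then j + l + 1 else j + l + 1 - k)"

lemma slot_range: "j < k \<Longrightarrow> 1 \<le> slot k j \<and> slot k j \<le> k"
  by (auto simp: slot_def)

lemma edge_slot_range: "j < k \<Longrightarrow> l < k - 1 \<Longrightarrow> 1 \<le> edge_slot k j l \<and> edge_slot k j l \<le> k"
  by (auto simp: edge_slot_def)

lemma slot_neq_edge_slot: "j < k \<Longrightarrow> l < k - 1 \<Longrightarrow> slot k j \<noteq> edge_slot k j l"
  by (auto simp: slot_def edge_slot_def)

lemma edge_slot_inj_row:
  "j < k \<Longrightarrow> l < k - 1 \<Longrightarrow> l' < k - 1 \<Longrightarrow> l \<noteq> l' \<Longrightarrow> edge_slot k j l \<noteq> edge_slot k j l'"
  by (auto simp: edge_slot_def)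

lemma edge_slot_inj_col:
  "j < k \<Longrightarrow> j' < k \<Longrightarrow> l < k - 1 \<Longrightarrow> j \<noteq> j' \<Longrightarrow> edge_slot k j l \<noteq> edge_slot k j' l"
  by (auto simp: edge_slot_def)

definition slot_vertex_colour :: "nat \<Rightarrow> nat \<Rightarrow> nat \<times> nat \<Rightarrow> int" where
  "slot_vertex_colour k n =
     (\<lambda>(i, j). int (if i = 0 then 2 * n + 1 else if j < k then slot k j * n + i else i))"

lemma Gkn_slot_colouring:
  assumes k3: "k \<ge> 3" and n1: "n \<ge> 1"
  shows "\<exists>c. pq_total_colouring (Gkn_V k n) (Gkn_E k n) ((k + 1) * n + 1) n c"
proof -
  let ?p = "(k + 1) * n + 1"
  have "3 * n \<le> k * n" using k3 by simp
  then have kn: "3 * int n \<le> int k * int n" by (metis of_nat_le_iff of_nat_mult of_nat_numeral)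
  have "pq_total_colouring (Gkn_V k n) (Gkn_E k n) ?p n
      (\<lambda>z. nat (case_sum (slot_vertex_colour k n)
        (Gkn_edge_colour k n (\<lambda>i j l. int (edge_slot k j l * n + i)) int) z mod int ?p))"
  proof (rule Gkn_pq_total_colouringI)
    show "k \<ge> 2" "n \<ge> 1" "0 < ?p" using assms by auto
    show "circ_dist_ge ?p n (slot_vertex_colour k n (i, j)) (slot_vertex_colour k n (i, k + l))"
      if "1 \<le> i" "i \<le> n" "j < k" "l < k - 1" for i j l
      using circ_dist_ge_slot_level[of "slot k j" k 0 n i] slot_range[of j k] that
      by (simp add: slot_vertex_colour_def)
    show "circ_dist_ge ?p n (slot_vertex_colour k n (end_f i))
        (slot_vertex_colour k n (end_f' n (i + 1)))" if "i \<le> n" for i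
      using that n1 k3
      by (auto simp: slot_vertex_colour_def end_f_def end_f'_def slot_def abs_if intro!: circ_dist_geI)
        (use kn in linarith)+
    show "circ_dist_ge ?p n (slot_vertex_colour k n (i, j)) (int (edge_slot k j l * n + i))"
      if "1 \<le> i" "i \<le> n" "j < k" "l < k - 1" for i j l
      using circ_dist_ge_slots slot_range edge_slot_range slot_neq_edge_slot that
      by (simp add: slot_vertex_colour_def)
    show "circ_dist_ge ?p n (slot_vertex_colour k n (i, k + l)) (int (edge_slot k j l * n + i))"
      if "1 \<le> i" "i \<le> n" "j < k" "l < k - 1" for i j l
      using circ_dist_ge_slot_level[of "edge_slot k j l" k 0 n i] edge_slot_range[of j k l]
        circ_dist_ge_sym that
      by (simp add: slot_vertex_colour_def)
    show "circ_dist_ge ?p n (slot_vertex_colour k n (end_f i)) (int i)" if "i \<le> n" for i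
      using that n1 kn
      by (auto simp: slot_vertex_colour_def end_f_def slot_def algebra_simps intro!: circ_dist_geI)
    show "circ_dist_ge ?p n (slot_vertex_colour k n (end_f' n (i + 1))) (int i)" if "i \<le> n" for i
      using that n1 kn
      by (auto simp: slot_vertex_colour_def end_f'_def slot_def algebra_simps intro!: circ_dist_geI)
    show "circ_dist_ge ?p n (int (edge_slot k j l * n + i)) (int (edge_slot k j l' * n + i))"
      if "1 \<le> i" "i \<le> n" "j < k" "l < k - 1" "l' < k - 1" "l \<noteq> l'" for i j l l'
      using circ_dist_ge_slots edge_slot_range edge_slot_inj_row that by simp
    show "circ_dist_ge ?p n (int (edge_slot k j l * n + i)) (int (edge_slot k j' l * n + i))"
      if "1 \<le> i" "i \<le> n" "j < k" "j' < k" "l < k - 1" "j \<noteq> j'" for i j j' l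
      using circ_dist_ge_slots edge_slot_range edge_slot_inj_col that by simp
    show "circ_dist_ge ?p n (int (edge_slot k 0 l * n + i)) (int i)"
      if "1 \<le> i" "i \<le> n" "l < k - 1" for i l
      using circ_dist_ge_slot_level[of "edge_slot k 0 l" k 0 n i] edge_slot_range[of 0 k l] that
      by simp
    show "circ_dist_ge ?p n (int (edge_slot k 1 l * n + (i + 1))) (int i)"
      if "i + 1 \<le> n" "l < k - 1" for i l
      using circ_dist_ge_slot_level[of "edge_slot k 1 l" k 1 n i] edge_slot_range[of 1 k l] that k3
      by (simp add: add.assoc)
    show "circ_dist_ge ?p n (int 0) (int n)"
      using kn by (intro circ_dist_geI) (simp_all add: algebra_simps)
  qed
  then show ?thesis by blast
qed

text \<open>For k = 2 the slot colouring leaves no colour for u; instead the colours advance by 2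
  from block to block, and u takes colour 3 n + 1, i.e. 0 modulo p.\<close>

definition pair_vertex_colour :: "nat \<Rightarrow> nat \<times> nat \<Rightarrow> int" where
  "pair_vertex_colour n =
     (\<lambda>(i, j). if i = 0 then 3 * int n + 1 else if j = 0 then 2 * int i
               else if j = 1 then 2 * int i + int n - 1 else 2 * int i + 2 * int n)"

lemma Gkn_pair_colouring:
  assumes k: "k = 2" and n1: "n \<ge> 1"
  shows "\<exists>c. pq_total_colouring (Gkn_V k n) (Gkn_E k n) ((k + 1) * n + 1) n c"
proof -
  let ?p = "3 * n + 1"
  let ?cblock = "\<lambda>i j l. if j = 0 then 2 * int i + int n else 2 * int i - 1"
  let ?cconn = "\<lambda>i. 2 * int i + 2 * int n + 1"
  have "pq_total_colouring (Gkn_V 2 n) (Gkn_E 2 n) ?p n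
      (\<lambda>z. nat (case_sum (pair_vertex_colour n) (Gkn_edge_colour 2 n ?cblock ?cconn) z mod int ?p))"
    by (rule Gkn_pq_total_colouringI)
      (use n1 in \<open>auto simp: pair_vertex_colour_def end_f_def end_f'_def less_Suc_eq
        intro!: circ_dist_geI\<close>)
  then show ?thesis using k by auto
qed

theorem theorem4:
  fixes k n :: nat
  assumes "k \<ge> 2" and "n \<ge> 1"
  shows "\<not> (\<exists>c. total_colouring (Gkn_V k n) (Gkn_E k n) (k + 1) c)
     \<and> real k + 1 < circ_total_chromatic (Gkn_V k n) (Gkn_E k n)
     \<and> circ_total_chromatic (Gkn_V k n) (Gkn_E k n) \<le> real k + 1 + 1 / real n"
proof -
  have type_2: "\<not> (\<exists>c. total_colouring (Gkn_V k n) (Gkn_E k n) (k + 1) c)"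
    using Gkn_not_total_colourable assms by blast
  obtain c where pq: "pq_total_colouring (Gkn_V k n) (Gkn_E k n) ((k + 1) * n + 1) n c"
    using Gkn_pair_colouring Gkn_slot_colouring assms by (cases "k = 2") force+
  have "real (k + 1) < circ_total_chromatic (Gkn_V k n) (Gkn_E k n)"
    by (rule circ_total_chromatic_gt[OF finite_elements_Gkn type_2 _ _ pq]) (use assms in auto)
  moreover have "circ_total_chromatic (Gkn_V k n) (Gkn_E k n) \<le> real ((k + 1) * n + 1) / real n"
    by (rule circ_total_chromatic_le[OF _ _ pq]) (use assms in auto)
  moreover have "real ((k + 1) * n + 1) / real n = real k + 1 + 1 / real n"
    using assms by (simp add: field_simps)
  ultimately show ?thesis using type_2 by simp
qed

end
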